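(* Assume (A1)–(A4) and let $b$ be consistent. Let $(\hat x,\hat y)$ be any feasible point. Then the real sequence $\{D_{\mu_k}f(\hat y,y_k)\}_{k\ge1}$ generated by the ADMM is convergent.
   Context: $\mathcal X,\mathcal Y,\mathcal H$ are real Hilbert spaces. Standing assumptions: (A1) $A:\mathcal X\to\mathcal H$ is bounded linear. (A2) $f:\mathcal Y\to(-\infty,\infty]$ is proper, lower semicontinuous and strongly convex with constant $c_0>0$: $f(ty_1+(1-t)y_2)+c_0t(1-t)\|y_1-y_2\|^2\le tf(y_1)+(1-t)f(y_2)$ for all $y_1,y_2$, $t\in[0,1]$. (A3) $W:\mathscr D(W)\subset\mathcal X\to\mathcal Y$ is a densely defined closed linear operator. (A4) There is $c_1>0$ with $\|Ax\|^2+\|Wx\|^2\ge c_1\|x\|^2$ for all $x\in\mathscr D(W)$. $\mathscr D(f)=\{y:f(y)<\infty\}$; $b$ is consistent if $b=Ax$ for some $x\in\mathscr D(W)$ with $Wx\in\mathscr D(f)$. A feasible point is a pair $(\hat x,\hat y)$ with $\hat x\in\mathscr D(W)$, $\hat y\in\mathscr D(f)$, $A\hat x=b$, $W\hat x=\hat y$. ADMM: fix $\rho_1,\rho_2>0$ and initial $y_0\in\mathcal Y$, $\lambda_0\in\mathcal H$, $\mu_0\in\mathcal Y$. For $k=0,1,\dots$: $x_{k+1}=\arg\min_{x\in\mathscr D(W)}\{\langle\lambda_k,Ax\rangle+\langle\mu_k,Wx\rangle+\frac{\rho_1}{2}\|Ax-b\|^2+\frac{\rho_2}{2}\|Wx-y_k\|^2\}$,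 $y_{k+1}=\arg\min_{y\in\mathcal Y}\{f(y)-\langle\mu_k,y\rangle+\frac{\rho_2}{2}\|Wx_{k+1}-y\|^2\}$, $\lambda_{k+1}=\lambda_k+\rho_1(Ax_{k+1}-b)$, $\mu_{k+1}=\mu_k+\rho_2(Wx_{k+1}-y_{k+1})$. (These minimizers exist and are unique.) One has $\mu_k\in\partial f(y_k)$ for $k\ge1$. Bregman distance: for $y$ with $\mu\in\partial f(y)$, $D_\mu f(\bar y,y)=f(\bar y)-f(y)-\langle\mu,\bar y-y\rangle$. *)

theory Defs
  imports "HOL-Analysis.Analysis"
begin

definition proper_fun :: "('y \<Rightarrow> ereal) \<Rightarrow> bool" where
  "proper_fun f \<longleftrightarrow> (\<forall>y. f y \<noteq> -\<infinity>) \<and> (\<exists>y. f y < \<infinity>)"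

definition lsc_fun :: "('y::topological_space \<Rightarrow> ereal) \<Rightarrow> bool" where
  "lsc_fun f \<longleftrightarrow> (\<forall>c::real. closed {y. f y \<le> ereal c})"

definition strongly_convex :: "real \<Rightarrow> ('y::real_normed_vector \<Rightarrow> ereal) \<Rightarrow> bool" where
  "strongly_convex c0 f \<longleftrightarrow>
     (\<forall>y1 y2 t. 0 \<le> t \<and> t \<le> 1 \<longrightarrow>
        f (t *\<^sub>R y1 + (1 - t) *\<^sub>R y2) + ereal (c0 * t * (1 - t) * (norm (y1 - y2))\<^sup>2)
          \<le> ereal t * f y1 + ereal (1 - t) * f y2)"

definition dom_fun :: "('y \<Rightarrow> ereal) \<Rightarrow> 'y set" where
  "dom_fun f = {y. f y < \<infinity>}"

definition closed_dd_operator :: "'x::real_normed_vector set \<Rightarrow> ('x \<Rightarrow> 'y::real_normed_vector) \<Rightarrow> bool" where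
  "closed_dd_operator D W \<longleftrightarrow>
     subspace D \<and>
     (\<forall>u\<in>D. \<forall>v\<in>D. W (u + v) = W u + W v) \<and>
     (\<forall>u\<in>D. \<forall>c. W (c *\<^sub>R u) = c *\<^sub>R W u) \<and>
     closure D = UNIV \<and>
     closed {(u, W u) | u. u \<in> D}"

definition consistent ::
  "('x \<Rightarrow> 'h) \<Rightarrow> 'x set \<Rightarrow> ('x \<Rightarrow> 'y) \<Rightarrow> ('y \<Rightarrow> ereal) \<Rightarrow> 'h \<Rightarrow> bool" where
  "consistent A D W f b \<longleftrightarrow> (\<exists>u\<in>D. b = A u \<and> W u \<in> dom_fun f)"

definition feasible ::
  "('x \<Rightarrow> 'h) \<Rightarrow> 'x set \<Rightarrow> ('x \<Rightarrow> 'y) \<Rightarrow> ('y \<Rightarrow> ereal) \<Rightarrow> 'h \<Rightarrow> 'x \<Rightarrow> 'y \<Rightarrow> bool" where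
  "feasible A D W f b xh yh \<longleftrightarrow> xh \<in> D \<and> yh \<in> dom_fun f \<and> A xh = b \<and> W xh = yh"

text \<open>The ADMM iteration: the sequences (x,y,lam,mu) are generated from the
  initial data y 0, lam 0, mu 0 (x 0 plays no role).  Since the minimizers exist
  and are unique, we characterize them as minimizers.\<close>
definition admm ::
  "('x::real_inner \<Rightarrow> 'h::real_inner) \<Rightarrow> 'x set \<Rightarrow> ('x \<Rightarrow> 'y::real_inner) \<Rightarrow> ('y \<Rightarrow> ereal) \<Rightarrow> 'h
   \<Rightarrow> real \<Rightarrow> real \<Rightarrow> (nat \<Rightarrow> 'x) \<Rightarrow> (nat \<Rightarrow> 'y) \<Rightarrow> (nat \<Rightarrow> 'h) \<Rightarrow> (nat \<Rightarrow> 'y) \<Rightarrow> bool" where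
  "admm A D W f b \<rho>1 \<rho>2 x y lam mu \<longleftrightarrow>
     (\<forall>k.
        x (Suc k) \<in> D \<and>
        (\<forall>u\<in>D.
           inner (lam k) (A (x (Suc k))) + inner (mu k) (W (x (Suc k)))
             + \<rho>1 / 2 * (norm (A (x (Suc k)) - b))\<^sup>2 + \<rho>2 / 2 * (norm (W (x (Suc k)) - y k))\<^sup>2
           \<le> inner (lam k) (A u) + inner (mu k) (W u)
             + \<rho>1 / 2 * (norm (A u - b))\<^sup>2 + \<rho>2 / 2 * (norm (W u - y k))\<^sup>2) \<and>
        (\<forall>v.
           f (y (Suc k)) - ereal (inner (mu k) (y (Suc k)))
             + ereal (\<rho>2 / 2 * (norm (W (x (Suc k)) - y (Suc k)))\<^sup>2)
           \<le> f v - ereal (inner (mu k) v) + ereal (\<rho>2 / 2 * (norm (W (x (Suc k)) - v))\<^sup>2)) \<and>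
        lam (Suc k) = lam k + \<rho>1 *\<^sub>R (A (x (Suc k)) - b) \<and>
        mu (Suc k) = mu k + \<rho>2 *\<^sub>R (W (x (Suc k)) - y (Suc k)))"

definition bregman :: "('y::real_inner \<Rightarrow> ereal) \<Rightarrow> 'y \<Rightarrow> 'y \<Rightarrow> 'y \<Rightarrow> ereal" where
  "bregman f mu ybar y = f ybar - f y - ereal (inner mu (ybar - y))"

end

theory Submission
  imports Defs
begin

text \<open>The optimality condition of the y-update makes mu(k+1) a subgradient of f at y(k+1),
  with a strong-convexity bonus, and that of the x-update says that lam(k+1) and
  mu(k+1) + rho2 (y(k+1) - y(k)) annihilate the range of (A, W).  Differencing consecutive
  steps shows that rho1 |A x(k+1) - b|^2 + rho2 |W x(k+1) - y(k+1)|^2 + rho2 |y(k+1) - y(k)|^2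
  decreases by at least 4 c0 |y(k+1) - y(k)|^2, so the increments of y are square summable.
  Against the feasible point, the Bregman distance corrected by
  rho2 <y(k+1) - y(k), y(k+1) - yh> then decreases up to summable errors and is bounded
  below, hence converges; the iterates stay bounded, so the correction tends to zero.\<close>

lemma le_of_le_add_mult_small:
  fixes X Y C :: real
  assumes le: "\<And>t. 0 < t \<Longrightarrow> t \<le> 1 \<Longrightarrow> X \<le> Y + t * C"
  shows "X \<le> Y"
proof (rule field_le_epsilon)
  fix e :: real
  assume e: "0 < e"
  define t where "t = min 1 (e / (\<bar>C\<bar> + 1))"
  have t: "0 < t" "t \<le> 1" using e by (auto simp: t_def)
  have "t * C \<le> t * (\<bar>C\<bar> + 1)" using t by (intro mult_left_mono) auto
  also have "\<dots> \<le> e / (\<bar>C\<bar> + 1) * (\<bar>C\<bar> + 1)" by (intro mult_right_mono) (auto simp: t_def)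
  also have "\<dots> = e" by simp
  finally show "X \<le> Y + e" using le[OF t] by linarith
qed

lemma linear_coeff_zero_if_quadratic_nonneg:
  fixes L M :: real
  assumes nonneg: "\<And>t. 0 \<le> t * L + t\<^sup>2 * M" and "M \<ge> 0"
  shows "L = 0"
proof (rule ccontr)
  assume "L \<noteq> 0"
  define c where "c = M + 1"
  have "c > 0" using \<open>M \<ge> 0\<close> by (simp add: c_def)
  define t where "t = - L / c"
  have "t \<noteq> 0" using \<open>L \<noteq> 0\<close> \<open>c > 0\<close> by (simp add: t_def)
  have "t * L + t\<^sup>2 * c = 0"
    using \<open>c > 0\<close> by (simp add: t_def power2_eq_square field_simps)
  moreover have "t\<^sup>2 > 0" using \<open>t \<noteq> 0\<close> by simp
  moreover have "t * L + t\<^sup>2 * M = (t * L + t\<^sup>2 * c) - t\<^sup>2" by (simp add: c_def algebra_simps)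
  ultimately have "t * L + t\<^sup>2 * M < 0" by linarith
  with nonneg[of t] show False by linarith
qed

lemma power2_le_of_quadratic_le:
  fixes c t p M :: real
  assumes "c > 0" and "c * t\<^sup>2 - p * t \<le> M"
  shows "(c * t)\<^sup>2 \<le> 2 * c * M + p\<^sup>2"
proof -
  have "c * (c * t\<^sup>2 - p * t) \<le> c * M" using assms by (simp add: mult_left_mono)
  moreover have "(c * t - p)\<^sup>2 = 2 * (c * (c * t\<^sup>2 - p * t)) - (c * t)\<^sup>2 + p\<^sup>2"
    by (simp add: power2_eq_square algebra_simps)
  moreover have "0 \<le> (c * t - p)\<^sup>2" by simp
  ultimately show ?thesis by linarith
qed

lemma power2_norm_add_scaleR:
  fixes p q :: "'a::real_inner"
  shows "(norm (p + t *\<^sub>R q))\<^sup>2 = (norm p)\<^sup>2 + 2 * t * inner p q + t\<^sup>2 * (norm q)\<^sup>2"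
proof -
  have "(norm (p + t *\<^sub>R q))\<^sup>2 = inner (p + t *\<^sub>R q) (p + t *\<^sub>R q)"
    by (rule power2_norm_eq_inner)
  also have "\<dots> = inner p p + 2 * t * inner p q + t\<^sup>2 * inner q q"
    by (simp add: inner_add_left inner_add_right inner_commute power2_eq_square algebra_simps)
  finally show ?thesis by (simp add: power2_norm_eq_inner)
qed

lemma summable_decrement_of_nonneg_decreasing:
  fixes q e :: "nat \<Rightarrow> real"
  assumes step: "\<And>m. q (Suc m) + e m \<le> q m" and q0: "\<And>m. q m \<ge> 0" and e0: "\<And>m. e m \<ge> 0"
  shows "summable e"
proof (rule summableI_nonneg_bounded[OF e0])
  fix n
  have "(\<Sum>i<n. e i) \<le> q 0 - q n"
  proof (induction n)
    case (Suc n)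
    then show ?case using step[of n] by simp
  qed simp
  with q0[of n] show "(\<Sum>i<n. e i) \<le> q 0" by linarith
qed

lemma convergent_if_quasi_decreasing_bounded_below:
  fixes E g :: "nat \<Rightarrow> real"
  assumes step: "\<And>m. E (Suc m) \<le> E m + g m" and "summable g" and g0: "\<And>m. g m \<ge> 0"
    and lb: "\<And>m. E m \<ge> B"
  shows "convergent E"
proof -
  define G where "G m = E m - (\<Sum>i<m. g i)" for m
  have "decseq G"
  proof (rule decseq_SucI)
    show "G (Suc n) \<le> G n" for n using step[of n] by (simp add: G_def)
  qed
  moreover have "B - suminf g \<le> G m" for m
    using lb[of m] sum_le_suminf[OF \<open>summable g\<close>, of "{..<m}"] g0 by (simp add: G_def)
  ultimately obtain L where "G \<longlonglongrightarrow> L" using decseq_convergent by blast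
  then have "(\<lambda>m. G m + (\<Sum>i<m. g i)) \<longlonglongrightarrow> L + suminf g"
    by (intro tendsto_add summable_LIMSEQ \<open>summable g\<close>)
  then show ?thesis by (auto simp: G_def convergent_def)
qed

lemma strongly_convex_prox_ineq:
  fixes f :: "'y::real_inner \<Rightarrow> ereal"
  assumes sc: "strongly_convex c0 f"
    and not_minf: "\<And>y. f y \<noteq> -\<infinity>"
    and fp: "f p = ereal Fp"
    and prox: "\<And>v. f p - ereal (inner m p) + ereal (\<rho> / 2 * (norm (a - p))\<^sup>2)
           \<le> f v - ereal (inner m v) + ereal (\<rho> / 2 * (norm (a - v))\<^sup>2)"
  shows "f z \<ge> ereal (Fp + inner (m + \<rho> *\<^sub>R (a - p)) (z - p) + c0 * (norm (z - p))\<^sup>2)"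
proof (cases "f z")
  case PInf
  then show ?thesis by simp
next
  case MInf
  with not_minf show ?thesis by simp
next
  case (real Z)
  define d where "d = z - p"
  define N where "N = (norm d)\<^sup>2"
  have "Fp + inner m d + \<rho> * inner (a - p) d + c0 * N \<le> Z + t * ((c0 + \<rho> / 2) * N)"
    if t: "0 < t" "t \<le> 1" for t
  proof -
    define v where "v = t *\<^sub>R z + (1 - t) *\<^sub>R p"
    have v_eq: "v = p + t *\<^sub>R d" by (simp add: v_def d_def algebra_simps)
    have "f v + ereal (c0 * t * (1 - t) * (norm (z - p))\<^sup>2) \<le> ereal t * f z + ereal (1 - t) * f p"
      using sc t unfolding strongly_convex_def v_def by auto
    then have conv: "f v + ereal (c0 * t * (1 - t) * N) \<le> ereal (t * Z + (1 - t) * Fp)"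
      using real fp by (simp add: N_def d_def)
    then obtain Fv where Fv: "f v = ereal Fv"
      using not_minf[of v] by (cases "f v") auto
    with conv have conv_real: "Fv + c0 * t * (1 - t) * N \<le> t * Z + (1 - t) * Fp" by simp
    have "Fp - inner m p + \<rho> / 2 * (norm (a - p))\<^sup>2 \<le> Fv - inner m v + \<rho> / 2 * (norm (a - v))\<^sup>2"
      using prox[of v] fp Fv by simp
    moreover have "(norm (a - v))\<^sup>2 = (norm (a - p))\<^sup>2 - 2 * t * inner (a - p) d + t\<^sup>2 * N"
    proof -
      have "a - v = (a - p) + (- t) *\<^sub>R d" by (simp add: v_eq algebra_simps)
      then show ?thesis by (simp only: power2_norm_add_scaleR) (simp add: N_def)
    qed
    moreover have "inner m v = inner m p + t * inner m d" by (simp add: v_eq inner_add_right)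
    ultimately have "Fp \<le> Fv - t * inner m d - \<rho> * t * inner (a - p) d + \<rho> / 2 * t\<^sup>2 * N"
      by (simp add: algebra_simps)
    with conv_real have "t * Fp \<le> t * (Z - c0 * (1 - t) * N - inner m d - \<rho> * inner (a - p) d + \<rho> / 2 * t * N)"
      by (simp add: algebra_simps power2_eq_square)
    then have "Fp \<le> Z - c0 * (1 - t) * N - inner m d - \<rho> * inner (a - p) d + \<rho> / 2 * t * N"
      using t by simp
    then show ?thesis by (simp add: algebra_simps)
  qed
  then have "Fp + inner m d + \<rho> * inner (a - p) d + c0 * N \<le> Z"
    by (rule le_of_le_add_mult_small)
  with real show ?thesis by (simp add: d_def N_def inner_add_left)
qed

lemma lyapunov_step_ineq:
  fixes s1 s2 :: "'h::real_inner" and r1 r2 d1 d2 :: "'y::real_inner"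
  assumes orth: "inner (\<rho>1 *\<^sub>R s2) (s2 - s1) + inner (\<rho>2 *\<^sub>R r2 + \<rho>2 *\<^sub>R (d2 - d1)) (r2 - r1 + d2) = 0"
    and mono: "inner (\<rho>2 *\<^sub>R r2) d2 \<ge> 2 * c0 * (norm d2)\<^sup>2"
    and "\<rho>1 > 0" "\<rho>2 > 0"
  shows "\<rho>1 * (norm s2)\<^sup>2 + \<rho>2 * (norm r2)\<^sup>2 + \<rho>2 * (norm d2)\<^sup>2 + 4 * c0 * (norm d2)\<^sup>2
     \<le> \<rho>1 * (norm s1)\<^sup>2 + \<rho>2 * (norm r1)\<^sup>2 + \<rho>2 * (norm d1)\<^sup>2"
proof -
  have "0 \<le> \<rho>1 * inner (s2 - s1) (s2 - s1)" using \<open>\<rho>1 > 0\<close> by simp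
  moreover have "0 \<le> \<rho>2 * inner ((d2 - d1) + (r2 - r1)) ((d2 - d1) + (r2 - r1))"
    using \<open>\<rho>2 > 0\<close> by simp
  ultimately show ?thesis using orth mono
    by (simp add: power2_norm_eq_inner inner_add_left inner_add_right inner_diff_left inner_diff_right
        inner_commute algebra_simps)
qed

lemma corrected_bregman_step_ineq:
  fixes s2 :: "'h::real_inner" and r2 d1 d2 v1 v2 :: "'y::real_inner"
  assumes bregman_step: "D2 - D1 \<le> \<rho>2 * inner r2 v2 - c0 * (norm d2)\<^sup>2"
    and orth: "inner (\<rho>1 *\<^sub>R s2) s2 + inner (\<rho>2 *\<^sub>R r2 + \<rho>2 *\<^sub>R (d2 - d1)) (r2 + v2) = 0"
    and "v2 = v1 + d2"
    and mono: "inner (\<rho>2 *\<^sub>R r2) d2 \<ge> 0"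
    and "\<rho>1 > 0" "\<rho>2 > 0" "c0 > 0"
  shows "D2 + \<rho>2 * inner d2 v2 \<le> D1 + \<rho>2 * inner d1 v1 + \<rho>2 * ((norm d1)\<^sup>2 + (norm d2)\<^sup>2)"
proof -
  have "0 \<le> \<rho>1 * inner s2 s2" using \<open>\<rho>1 > 0\<close> by simp
  moreover have "0 \<le> \<rho>2 * inner (r2 - (1/2) *\<^sub>R d1) (r2 - (1/2) *\<^sub>R d1)"
    "0 \<le> \<rho>2 * inner (d1 - d2) (d1 - d2)" "0 \<le> \<rho>2 * inner d2 d2" "0 \<le> \<rho>2 * inner d1 d1"
    using \<open>\<rho>2 > 0\<close> by simp_all
  moreover have "0 \<le> c0 * inner d2 d2" using \<open>c0 > 0\<close> by simp
  ultimately show ?thesis using bregman_step orth mono unfolding \<open>v2 = v1 + d2\<close>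
    by (simp add: power2_norm_eq_inner inner_add_left inner_add_right inner_diff_left inner_diff_right
        inner_commute algebra_simps)
qed

locale admm_iteration =
  fixes A :: "'x::real_inner \<Rightarrow> 'h::real_inner" and D :: "'x set" and W :: "'x \<Rightarrow> 'y::real_inner"
    and f :: "'y \<Rightarrow> ereal" and b :: 'h and c0 \<rho>1 \<rho>2 :: real
    and x :: "nat \<Rightarrow> 'x" and y :: "nat \<Rightarrow> 'y" and lam :: "nat \<Rightarrow> 'h" and mu :: "nat \<Rightarrow> 'y"
  assumes bounded_linear_A: "bounded_linear A"
    and closed_dd_W: "closed_dd_operator D W"
    and proper_f: "proper_fun f"
    and c0_pos: "c0 > 0" and strongly_convex_f: "strongly_convex c0 f"
    and \<rho>1_pos: "\<rho>1 > 0" and \<rho>2_pos: "\<rho>2 > 0"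
    and admm_iterates: "admm A D W f b \<rho>1 \<rho>2 x y lam mu"
begin

sublocale A: bounded_linear A by (rule bounded_linear_A)

lemma subspace_D: "subspace D"
  and W_add: "u \<in> D \<Longrightarrow> v \<in> D \<Longrightarrow> W (u + v) = W u + W v"
  and W_scaleR: "u \<in> D \<Longrightarrow> W (c *\<^sub>R u) = c *\<^sub>R W u"
  using closed_dd_W unfolding closed_dd_operator_def by auto

lemma W_diff:
  assumes "u \<in> D" "v \<in> D"
  shows "W (u - v) = W u - W v"
proof -
  have "- v \<in> D" using subspace_D \<open>v \<in> D\<close> by (simp add: subspace_neg)
  then have "W (u + - v) = W u + W (- v)" using W_add \<open>u \<in> D\<close> by blast
  moreover have "W (- v) = - W v" using W_scaleR[OF \<open>v \<in> D\<close>, of "-1"] by simp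
  ultimately show ?thesis by simp
qed

lemma x_in_D: "x (Suc k) \<in> D"
  and lam_Suc: "lam (Suc k) = lam k + \<rho>1 *\<^sub>R (A (x (Suc k)) - b)"
  and mu_Suc: "mu (Suc k) = mu k + \<rho>2 *\<^sub>R (W (x (Suc k)) - y (Suc k))"
  using admm_iterates unfolding admm_def by blast+

lemma not_minf: "f v \<noteq> -\<infinity>"
  using proper_f unfolding proper_fun_def by blast

lemma x_update_first_order:
  assumes u: "u \<in> D"
  shows "inner (lam k + \<rho>1 *\<^sub>R (A (x (Suc k)) - b)) (A u)
       + inner (mu k + \<rho>2 *\<^sub>R (W (x (Suc k)) - y k)) (W u) = 0"
proof -
  let ?xp = "x (Suc k)"
  define \<Phi> where "\<Phi> w = inner (lam k) (A w) + inner (mu k) (W w)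
      + \<rho>1 / 2 * (norm (A w - b))\<^sup>2 + \<rho>2 / 2 * (norm (W w - y k))\<^sup>2" for w
  define L where "L = inner (lam k + \<rho>1 *\<^sub>R (A ?xp - b)) (A u)
      + inner (mu k + \<rho>2 *\<^sub>R (W ?xp - y k)) (W u)"
  define M where "M = \<rho>1 / 2 * (norm (A u))\<^sup>2 + \<rho>2 / 2 * (norm (W u))\<^sup>2"
  have min: "\<Phi> ?xp \<le> \<Phi> w" if "w \<in> D" for w
    using admm_iterates that unfolding admm_def \<Phi>_def by blast
  have "0 \<le> t * L + t\<^sup>2 * M" for t
  proof -
    have tu: "t *\<^sub>R u \<in> D" using subspace_D u by (simp add: subspace_scale)
    then have "?xp + t *\<^sub>R u \<in> D" using subspace_D x_in_D by (simp add: subspace_add)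
    then have "0 \<le> \<Phi> (?xp + t *\<^sub>R u) - \<Phi> ?xp" using min by simp
    moreover have "\<Phi> (?xp + t *\<^sub>R u) - \<Phi> ?xp = t * L + t\<^sup>2 * M"
    proof -
      have W_shift: "W (?xp + t *\<^sub>R u) = W ?xp + t *\<^sub>R W u"
        using W_add[OF x_in_D tu] W_scaleR[OF u] by simp
      have "A (?xp + t *\<^sub>R u) - b = (A ?xp - b) + t *\<^sub>R A u"
        by (simp add: A.add A.scaleR)
      then have nA: "(norm (A (?xp + t *\<^sub>R u) - b))\<^sup>2
          = (norm (A ?xp - b))\<^sup>2 + 2 * t * inner (A ?xp - b) (A u) + t\<^sup>2 * (norm (A u))\<^sup>2"
        by (simp only: power2_norm_add_scaleR)
      have "W (?xp + t *\<^sub>R u) - y k = (W ?xp - y k) + t *\<^sub>R W u"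
        by (simp add: W_shift)
      then have nW: "(norm (W (?xp + t *\<^sub>R u) - y k))\<^sup>2
          = (norm (W ?xp - y k))\<^sup>2 + 2 * t * inner (W ?xp - y k) (W u) + t\<^sup>2 * (norm (W u))\<^sup>2"
        by (simp only: power2_norm_add_scaleR)
      have iW: "inner (mu k) (W (?xp + t *\<^sub>R u)) = inner (mu k) (W ?xp) + t * inner (mu k) (W u)"
        by (simp add: W_shift inner_add_right)
      show ?thesis unfolding \<Phi>_def nA nW iW
        by (simp add: L_def M_def A.add A.scaleR inner_add_left inner_add_right algebra_simps)
    qed
    ultimately show ?thesis by simp
  qed
  moreover have "M \<ge> 0" using \<rho>1_pos \<rho>2_pos by (simp add: M_def)
  ultimately have "L = 0" by (rule linear_coeff_zero_if_quadratic_nonneg)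
  then show ?thesis by (simp add: L_def)
qed

lemma multipliers_orthogonal:
  assumes "u \<in> D"
  shows "inner (lam (Suc k)) (A u) + inner (mu (Suc k) + \<rho>2 *\<^sub>R (y (Suc k) - y k)) (W u) = 0"
proof -
  have "mu (Suc k) + \<rho>2 *\<^sub>R (y (Suc k) - y k) = mu k + \<rho>2 *\<^sub>R (W (x (Suc k)) - y k)"
    by (simp add: mu_Suc algebra_simps)
  then show ?thesis using x_update_first_order[OF assms, of k] by (simp add: lam_Suc)
qed

definition fy :: "nat \<Rightarrow> real" where "fy n = real_of_ereal (f (y n))"

lemma y_update_min:
  "f (y (Suc k)) - ereal (inner (mu k) (y (Suc k))) + ereal (\<rho>2 / 2 * (norm (W (x (Suc k)) - y (Suc k)))\<^sup>2)
     \<le> f v - ereal (inner (mu k) v) + ereal (\<rho>2 / 2 * (norm (W (x (Suc k)) - v))\<^sup>2)"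
  using admm_iterates unfolding admm_def by blast

lemma f_y_finite: "f (y (Suc k)) = ereal (fy (Suc k))"
proof -
  obtain v where "f v < \<infinity>" using proper_f unfolding proper_fun_def by blast
  have "f (y (Suc k)) \<noteq> \<infinity>"
  proof
    assume "f (y (Suc k)) = \<infinity>"
    then have "\<infinity> \<le> f v - ereal (inner (mu k) v) + ereal (\<rho>2 / 2 * (norm (W (x (Suc k)) - v))\<^sup>2)"
      using y_update_min[of k v] by simp
    with \<open>f v < \<infinity>\<close> not_minf[of v] show False by (cases "f v") auto
  qed
  with not_minf show ?thesis unfolding fy_def by (cases "f (y (Suc k))") auto
qed

lemma mu_strong_subgradient:
  "f z \<ge> ereal (fy (Suc k) + inner (mu (Suc k)) (z - y (Suc k)) + c0 * (norm (z - y (Suc k)))\<^sup>2)"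
  using strongly_convex_prox_ineq[OF strongly_convex_f not_minf f_y_finite y_update_min]
  by (simp add: mu_Suc)

lemma mu_strong_subgradient_iterates:
  "fy (Suc j) \<ge> fy (Suc k) + inner (mu (Suc k)) (y (Suc j) - y (Suc k)) + c0 * (norm (y (Suc j) - y (Suc k)))\<^sup>2"
  using mu_strong_subgradient[where z = "y (Suc j)"] by (simp add: f_y_finite)

definition primal_res :: "nat \<Rightarrow> 'h" where "primal_res n = A (x n) - b"

definition coupling_res :: "nat \<Rightarrow> 'y" where "coupling_res n = W (x n) - y n"

definition y_step :: "nat \<Rightarrow> 'y" where "y_step n = y (Suc n) - y n"

lemma mu_Suc_coupling_res: "mu (Suc k) = mu k + \<rho>2 *\<^sub>R coupling_res (Suc k)"
  by (simp add: mu_Suc coupling_res_def)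

text \<open>Strong monotonicity of the subdifferential: rho2 times the coupling residual is the
  increment mu(k+2) - mu(k+1) of the subgradients.\<close>
lemma coupling_res_monotone:
  "inner (\<rho>2 *\<^sub>R coupling_res (Suc (Suc k))) (y_step (Suc k)) \<ge> 2 * c0 * (norm (y_step (Suc k)))\<^sup>2"
proof -
  have "fy (Suc (Suc k)) \<ge> fy (Suc k) + inner (mu (Suc k)) (y_step (Suc k)) + c0 * (norm (y_step (Suc k)))\<^sup>2"
    using mu_strong_subgradient_iterates[where j = "Suc k" and k = k] by (simp add: y_step_def)
  moreover have "fy (Suc k) \<ge> fy (Suc (Suc k)) - inner (mu (Suc (Suc k))) (y_step (Suc k))
      + c0 * (norm (y_step (Suc k)))\<^sup>2"
    using mu_strong_subgradient_iterates[where j = k and k = "Suc k"]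
    by (simp add: y_step_def norm_minus_commute inner_diff_right)
  moreover have "inner (\<rho>2 *\<^sub>R coupling_res (Suc (Suc k))) (y_step (Suc k))
      = inner (mu (Suc (Suc k))) (y_step (Suc k)) - inner (mu (Suc k)) (y_step (Suc k))"
    by (simp add: mu_Suc_coupling_res[of "Suc k"] inner_add_left)
  ultimately show ?thesis by linarith
qed

lemma multipliers_orthogonal_diff:
  assumes "u \<in> D"
  shows "inner (\<rho>1 *\<^sub>R primal_res (Suc (Suc m))) (A u)
       + inner (\<rho>2 *\<^sub>R coupling_res (Suc (Suc m)) + \<rho>2 *\<^sub>R (y_step (Suc m) - y_step m)) (W u) = 0"
proof -
  have "inner (lam (Suc m) + \<rho>1 *\<^sub>R primal_res (Suc (Suc m))) (A u)
      + inner (mu (Suc m) + (\<rho>2 *\<^sub>R coupling_res (Suc (Suc m)) + \<rho>2 *\<^sub>R y_step (Suc m))) (W u) = 0"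
    using multipliers_orthogonal[OF assms, of "Suc m"]
    by (simp add: lam_Suc[of "Suc m"] mu_Suc_coupling_res[of "Suc m"] primal_res_def y_step_def
        algebra_simps)
  moreover have "inner (lam (Suc m)) (A u) + inner (mu (Suc m) + \<rho>2 *\<^sub>R y_step m) (W u) = 0"
    using multipliers_orthogonal[OF assms, of m] by (simp add: y_step_def)
  ultimately show ?thesis
    by (simp add: inner_add_left inner_diff_left scaleR_diff_right algebra_simps)
qed

definition lyapunov :: "nat \<Rightarrow> real" where
  "lyapunov n = \<rho>1 * (norm (primal_res (Suc n)))\<^sup>2 + \<rho>2 * (norm (coupling_res (Suc n)))\<^sup>2
     + \<rho>2 * (norm (y_step n))\<^sup>2"

lemma lyapunov_nonneg: "lyapunov n \<ge> 0"
  using \<rho>1_pos \<rho>2_pos by (simp add: lyapunov_def)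

lemma lyapunov_decrease: "lyapunov (Suc m) + 4 * c0 * (norm (y_step (Suc m)))\<^sup>2 \<le> lyapunov m"
proof -
  have "x (Suc (Suc m)) - x (Suc m) \<in> D" using subspace_D x_in_D by (simp add: subspace_diff)
  moreover have "A (x (Suc (Suc m)) - x (Suc m)) = primal_res (Suc (Suc m)) - primal_res (Suc m)"
    by (simp add: A.diff primal_res_def)
  moreover have "W (x (Suc (Suc m)) - x (Suc m))
      = coupling_res (Suc (Suc m)) - coupling_res (Suc m) + y_step (Suc m)"
    using W_diff[OF x_in_D x_in_D] by (simp add: coupling_res_def y_step_def)
  ultimately have "inner (\<rho>1 *\<^sub>R primal_res (Suc (Suc m))) (primal_res (Suc (Suc m)) - primal_res (Suc m))
      + inner (\<rho>2 *\<^sub>R coupling_res (Suc (Suc m)) + \<rho>2 *\<^sub>R (y_step (Suc m) - y_step m))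
          (coupling_res (Suc (Suc m)) - coupling_res (Suc m) + y_step (Suc m)) = 0"
    using multipliers_orthogonal_diff by metis
  from lyapunov_step_ineq[OF this coupling_res_monotone \<rho>1_pos \<rho>2_pos]
  show ?thesis by (simp add: lyapunov_def)
qed

lemma summable_y_step_sq: "summable (\<lambda>m. (norm (y_step m))\<^sup>2)"
proof -
  have "summable (\<lambda>m. 4 * c0 * (norm (y_step (Suc m)))\<^sup>2)"
    using c0_pos by (intro summable_decrement_of_nonneg_decreasing[where q = lyapunov,
        OF lyapunov_decrease lyapunov_nonneg]) simp
  then have "summable (\<lambda>m. (norm (y_step (Suc m)))\<^sup>2)"
    using summable_mult[of _ "1 / (4 * c0)"] c0_pos by simp
  then show ?thesis by (subst summable_Suc_iff[symmetric])
qed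

lemma decseq_lyapunov: "decseq lyapunov"
proof (rule decseq_SucI)
  fix m
  have "0 \<le> 4 * c0 * (norm (y_step (Suc m)))\<^sup>2" using c0_pos by simp
  then show "lyapunov (Suc m) \<le> lyapunov m" using lyapunov_decrease[of m] by linarith
qed

lemma y_step_sq_le: "(norm (y_step m))\<^sup>2 \<le> lyapunov 0 / \<rho>2"
proof -
  have "0 \<le> \<rho>1 * (norm (primal_res (Suc m)))\<^sup>2" "0 \<le> \<rho>2 * (norm (coupling_res (Suc m)))\<^sup>2"
    using \<rho>1_pos \<rho>2_pos by simp_all
  then have "\<rho>2 * (norm (y_step m))\<^sup>2 \<le> lyapunov m" by (simp add: lyapunov_def)
  also have "\<dots> \<le> lyapunov 0" using decseq_lyapunov by (simp add: decseq_def)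
  finally show ?thesis using \<rho>2_pos by (simp add: field_simps)
qed

end

locale admm_feasible = admm_iteration +
  fixes xh and yh
  assumes xh_in_D: "xh \<in> D" and A_xh: "A xh = b" and W_xh: "W xh = yh" and f_yh: "f yh < \<infinity>"
begin

definition bregman_dist :: "nat \<Rightarrow> real" where
  "bregman_dist n = real_of_ereal (f yh) - fy n - inner (mu n) (yh - y n)"

lemma f_yh_finite:
  obtains Fh where "f yh = ereal Fh"
  using f_yh not_minf[of yh] by (cases "f yh") auto

lemma bregman_Suc_eq: "bregman f (mu (Suc k)) yh (y (Suc k)) = ereal (bregman_dist (Suc k))"
  by (rule f_yh_finite) (simp add: bregman_def bregman_dist_def f_y_finite)

lemma bregman_dist_ge: "bregman_dist (Suc m) \<ge> c0 * (norm (y (Suc m) - yh))\<^sup>2"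
proof -
  obtain Fh where "f yh = ereal Fh" by (rule f_yh_finite)
  with mu_strong_subgradient[where z = yh and k = m] show ?thesis
    by (simp add: bregman_dist_def norm_minus_commute)
qed

definition step_bound :: real where "step_bound = sqrt (lyapunov 0 / \<rho>2)"

lemma norm_y_step_le: "norm (y_step m) \<le> step_bound"
  using y_step_sq_le[of m] by (simp add: step_bound_def real_le_rsqrt)

text \<open>The Bregman distance alone is not quasi-Fejer monotone; the correction term absorbs
  the coupling residual produced by the x-update.\<close>
definition corrected_bregman :: "nat \<Rightarrow> real" where
  "corrected_bregman m = bregman_dist (Suc m) + \<rho>2 * inner (y_step m) (y (Suc m) - yh)"

lemma corrected_bregman_step:
  "corrected_bregman (Suc m)
     \<le> corrected_bregman m + \<rho>2 * ((norm (y_step m))\<^sup>2 + (norm (y_step (Suc m)))\<^sup>2)"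
proof -
  let ?r = "coupling_res (Suc (Suc m))" and ?v = "\<lambda>n. y n - yh"
  have "fy (Suc (Suc m)) \<ge> fy (Suc m) + inner (mu (Suc m)) (y_step (Suc m)) + c0 * (norm (y_step (Suc m)))\<^sup>2"
    using mu_strong_subgradient_iterates[where j = "Suc m" and k = m] by (simp add: y_step_def)
  moreover have "bregman_dist (Suc (Suc m)) - bregman_dist (Suc m)
      = fy (Suc m) - fy (Suc (Suc m)) + inner (mu (Suc m)) (y_step (Suc m)) + \<rho>2 * inner ?r (?v (Suc (Suc m)))"
    by (simp add: bregman_dist_def mu_Suc_coupling_res[of "Suc m"] y_step_def inner_add_left
        inner_diff_right algebra_simps)
  ultimately have bregman_step: "bregman_dist (Suc (Suc m)) - bregman_dist (Suc m)
      \<le> \<rho>2 * inner ?r (?v (Suc (Suc m))) - c0 * (norm (y_step (Suc m)))\<^sup>2"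
    by linarith
  have "x (Suc (Suc m)) - xh \<in> D" using subspace_D x_in_D xh_in_D by (simp add: subspace_diff)
  moreover have "A (x (Suc (Suc m)) - xh) = primal_res (Suc (Suc m))"
    by (simp add: A.diff A_xh primal_res_def)
  moreover have "W (x (Suc (Suc m)) - xh) = ?r + ?v (Suc (Suc m))"
    using W_diff[OF x_in_D xh_in_D] by (simp add: W_xh coupling_res_def)
  ultimately have orth: "inner (\<rho>1 *\<^sub>R primal_res (Suc (Suc m))) (primal_res (Suc (Suc m)))
      + inner (\<rho>2 *\<^sub>R ?r + \<rho>2 *\<^sub>R (y_step (Suc m) - y_step m)) (?r + ?v (Suc (Suc m))) = 0"
    using multipliers_orthogonal_diff by metis
  have "?v (Suc (Suc m)) = ?v (Suc m) + y_step (Suc m)" by (simp add: y_step_def)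
  moreover have "inner (\<rho>2 *\<^sub>R ?r) (y_step (Suc m)) \<ge> 0"
  proof -
    have "0 \<le> 2 * c0 * (norm (y_step (Suc m)))\<^sup>2" using c0_pos by simp
    with coupling_res_monotone[of m] show ?thesis by linarith
  qed
  ultimately show ?thesis
    using corrected_bregman_step_ineq[OF bregman_step orth _ _ \<rho>1_pos \<rho>2_pos c0_pos]
    by (simp add: corrected_bregman_def)
qed

lemma corrected_bregman_ge:
  "corrected_bregman m \<ge> c0 * (norm (y (Suc m) - yh))\<^sup>2 - \<rho>2 * step_bound * norm (y (Suc m) - yh)"
proof -
  have "\<bar>inner (y_step m) (y (Suc m) - yh)\<bar> \<le> norm (y_step m) * norm (y (Suc m) - yh)"
    by (rule Cauchy_Schwarz_ineq2)
  also have "\<dots> \<le> step_bound * norm (y (Suc m) - yh)"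
    using norm_y_step_le by (simp add: mult_right_mono)
  finally have "- (step_bound * norm (y (Suc m) - yh)) \<le> inner (y_step m) (y (Suc m) - yh)"
    by (simp only: abs_le_iff) linarith
  from mult_left_mono[OF this less_imp_le[OF \<rho>2_pos]]
  have "\<rho>2 * inner (y_step m) (y (Suc m) - yh) \<ge> - (\<rho>2 * (step_bound * norm (y (Suc m) - yh)))"
    by simp
  with bregman_dist_ge[of m] show ?thesis by (simp add: corrected_bregman_def)
qed

lemma convergent_corrected_bregman: "convergent corrected_bregman"
proof (rule convergent_if_quasi_decreasing_bounded_below[where E = corrected_bregman,
      OF corrected_bregman_step])
  show "summable (\<lambda>m. \<rho>2 * ((norm (y_step m))\<^sup>2 + (norm (y_step (Suc m)))\<^sup>2))"
    using summable_y_step_sq summable_y_step_sq[THEN summable_ignore_initial_segment[of _ 1]]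
    by (intro summable_mult summable_add) simp_all
  show "\<rho>2 * ((norm (y_step m))\<^sup>2 + (norm (y_step (Suc m)))\<^sup>2) \<ge> 0" for m
    using \<rho>2_pos by simp
  show "corrected_bregman m \<ge> - (\<rho>2 * step_bound)\<^sup>2 / (2 * c0)" for m
  proof -
    have "(c0 * norm (y (Suc m) - yh))\<^sup>2 \<le> 2 * c0 * corrected_bregman m + (\<rho>2 * step_bound)\<^sup>2"
      using power2_le_of_quadratic_le[OF c0_pos corrected_bregman_ge] .
    then have "0 \<le> 2 * c0 * corrected_bregman m + (\<rho>2 * step_bound)\<^sup>2"
      using zero_le_power2 order_trans by blast
    then show ?thesis using c0_pos by (simp add: field_simps)
  qed
qed

lemma bounded_y: "\<exists>V. \<forall>m. norm (y (Suc m) - yh) \<le> V"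
proof -
  obtain M where M: "\<And>m. \<bar>corrected_bregman m\<bar> \<le> M"
    using convergent_imp_Bseq[OF convergent_corrected_bregman] unfolding Bseq_def by auto
  have "norm (y (Suc m) - yh) \<le> sqrt (2 * c0 * M + (\<rho>2 * step_bound)\<^sup>2) / c0" for m
  proof -
    have "c0 * (norm (y (Suc m) - yh))\<^sup>2 - \<rho>2 * step_bound * norm (y (Suc m) - yh) \<le> M"
      using corrected_bregman_ge[of m] M[of m] by simp
    then have "(c0 * norm (y (Suc m) - yh))\<^sup>2 \<le> 2 * c0 * M + (\<rho>2 * step_bound)\<^sup>2"
      by (rule power2_le_of_quadratic_le[OF c0_pos])
    then have "c0 * norm (y (Suc m) - yh) \<le> sqrt (2 * c0 * M + (\<rho>2 * step_bound)\<^sup>2)"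
      by (rule real_le_rsqrt)
    then show ?thesis using c0_pos by (simp add: pos_le_divide_eq mult.commute)
  qed
  then show ?thesis by blast
qed

lemma convergent_bregman_dist: "convergent (\<lambda>k. bregman_dist (Suc k))"
proof -
  obtain V where V: "\<And>m. norm (y (Suc m) - yh) \<le> V" using bounded_y by blast
  have "(\<lambda>m. norm (y_step m)) \<longlonglongrightarrow> 0"
    using tendsto_real_sqrt[OF summable_LIMSEQ_zero[OF summable_y_step_sq]] by simp
  then have step_to_0: "(\<lambda>m. \<rho>2 * V * norm (y_step m)) \<longlonglongrightarrow> 0"
    using tendsto_mult_left[where c = "\<rho>2 * V"] by fastforce
  have "norm (\<rho>2 * inner (y_step m) (y (Suc m) - yh)) \<le> \<rho>2 * V * norm (y_step m)" for m
  proof -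
    have "\<bar>inner (y_step m) (y (Suc m) - yh)\<bar> \<le> norm (y_step m) * norm (y (Suc m) - yh)"
      by (rule Cauchy_Schwarz_ineq2)
    also have "\<dots> \<le> norm (y_step m) * V" using V[of m] by (simp add: mult_left_mono)
    finally have "\<rho>2 * \<bar>inner (y_step m) (y (Suc m) - yh)\<bar> \<le> \<rho>2 * (norm (y_step m) * V)"
      using \<rho>2_pos by (intro mult_left_mono) simp_all
    then show ?thesis by (simp only: real_norm_def abs_mult abs_of_pos[OF \<rho>2_pos] mult_ac)
  qed
  then have "\<forall>\<^sub>F m in sequentially. norm (\<rho>2 * inner (y_step m) (y (Suc m) - yh)) \<le> \<rho>2 * V * norm (y_step m)"
    by (intro always_eventually allI)
  then have correction_to_0: "(\<lambda>m. \<rho>2 * inner (y_step m) (y (Suc m) - yh)) \<longlonglongrightarrow> 0"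
    using step_to_0 by (rule Lim_null_comparison)
  obtain L where "corrected_bregman \<longlonglongrightarrow> L"
    using convergent_corrected_bregman by (auto simp: convergent_def)
  then have "(\<lambda>m. corrected_bregman m - \<rho>2 * inner (y_step m) (y (Suc m) - yh)) \<longlonglongrightarrow> L - 0"
    using correction_to_0 by (rule tendsto_diff)
  then have "(\<lambda>k. bregman_dist (Suc k)) \<longlonglongrightarrow> L" by (simp add: corrected_bregman_def)
  then show ?thesis by (rule convergentI)
qed

end

text \<open>The hypotheses (A4), lower semicontinuity and consistency only guarantee that the
  iteration is well defined; here the iterates are given.\<close>
theorem lemma2p6:
  fixes A :: "'x::{real_inner, complete_space} \<Rightarrow> 'h::{real_inner, complete_space}"
    and W :: "'x \<Rightarrow> 'y::{real_inner, complete_space}"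
    and D :: "'x set"
    and f :: "'y \<Rightarrow> ereal"
    and b :: 'h and c0 c1 \<rho>1 \<rho>2 :: real
    and x :: "nat \<Rightarrow> 'x" and y :: "nat \<Rightarrow> 'y" and lam :: "nat \<Rightarrow> 'h" and mu :: "nat \<Rightarrow> 'y"
    and xh :: 'x and yh :: 'y
  assumes A1: "bounded_linear A"
    and A2: "proper_fun f" "lsc_fun f" "c0 > 0" "strongly_convex c0 f"
    and A3: "closed_dd_operator D W"
    and A4: "c1 > 0" "\<forall>u\<in>D. (norm (A u))\<^sup>2 + (norm (W u))\<^sup>2 \<ge> c1 * (norm u)\<^sup>2"
    and cons: "consistent A D W f b"
    and rho: "\<rho>1 > 0" "\<rho>2 > 0"
    and iter: "admm A D W f b \<rho>1 \<rho>2 x y lam mu"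
    and feas: "feasible A D W f b xh yh"
  shows "\<exists>L::real. (\<lambda>k. bregman f (mu (Suc k)) yh (y (Suc k))) \<longlonglongrightarrow> ereal L"
proof -
  have "admm_feasible A D W f b c0 \<rho>1 \<rho>2 x y lam mu xh yh"
    using A1 A2 A3 rho iter feas
    unfolding admm_feasible_def admm_feasible_axioms_def admm_iteration_def feasible_def dom_fun_def
    by auto
  then interpret admm_feasible A D W f b c0 \<rho>1 \<rho>2 x y lam mu xh yh .
  obtain L where "(\<lambda>k. bregman_dist (Suc k)) \<longlonglongrightarrow> L"
    using convergent_bregman_dist by (auto simp: convergent_def)
  then have "(\<lambda>k. bregman f (mu (Suc k)) yh (y (Suc k))) \<longlonglongrightarrow> ereal L"
    by (simp add: bregman_Suc_eq)
  then show ?thesis by blast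
qed

end
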